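(* Let $R>0$ and $\Theta=(\alpha,\rho_r,\rho_d,\rho_s,\rho_0,T)$ with $\alpha>1$, $\rho_r,\rho_d,\rho_s,\rho_0>0$, $T>1$, and with $\beta=\rho_d/\rho_r$, $\delta=\rho_s/\rho_r$, $\mu=\rho_0/\rho_r$ suppose $\min\big(\frac T4,\frac1{3\mu},\frac{3\beta}{2\mu}\big)>10$ and $\rho_r>\frac{\alpha}{2\delta}$. Then $$\frac38\,\zeta'_{csi}\Big(\frac43R,\Theta\Big)<\zeta'_{zf}(R,\Theta)<\zeta'_{csi}(R,\Theta).$$
   Context: $K_{max}(\Theta)=\min\big(\frac T4,\frac{\rho_r}{3\rho_0},\frac{3\rho_d}{2\rho_0}\big)$. For reals $M>K$, $1\le K\le\tau<T$ and rate $r>0$, let $$\gamma_u=\frac{K+\tau}{2\tau(M-K)}\Big(2^{\frac{r}{K(1-\tau/T)}}-1\Big)+\sqrt{\Big(\frac{K+\tau}{2\tau(M-K)}\Big(2^{\frac{r}{K(1-\tau/T)}}-1\Big)\Big)^2+\frac{2^{\frac{r}{K(1-\tau/T)}}-1}{\tau(M-K)}},$$ $$\frac{r}{\zeta_{zf}(M,K,\tau,r,\Theta)}=\alpha K\gamma_u+\rho_s+K\Big(\rho_d+\frac{8K^2\rho_0}{3T}\Big)+M\Big(\rho_r+2K\rho_0+\frac{4K^2\rho_0}{T}\Big).$$ $\zeta'_{zf}(r,\Theta)$ is the supremum of $\zeta_{zf}(M,K,\tau,r,\Theta)$ over real $(M,K,\tau)$ with $1\le K\le K_{max}(\Theta)$,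 $K\le\tau<T$, $M>K$. For real $M>K\ge1$, $\frac{1}{\zeta_{csi}(M,K,r,\Theta)}=\frac1r\big[\frac{\alpha K}{M-K}(2^{r/K}-1)+M\rho_r+K\rho_d+\rho_s\big]$, and $\zeta'_{csi}(r,\Theta)$ is the maximum of $\zeta_{csi}(M,K,r,\Theta)$ over real $(M,K)$ with $1\le K\le K_{max}(\Theta)$, $M>K$. *)

theory Defs
  imports Complex_Main
begin

definition Kmax :: "real \<Rightarrow> real \<Rightarrow> real \<Rightarrow> real \<Rightarrow> real \<Rightarrow> real \<Rightarrow> real" where
  "Kmax \<alpha> \<rho>r \<rho>d \<rho>s \<rho>0 T = min (T / 4) (min (\<rho>r / (3 * \<rho>0)) (3 * \<rho>d / (2 * \<rho>0)))"

definition gamma_u :: "real \<Rightarrow> real \<Rightarrow> real \<Rightarrow> real \<Rightarrow> real \<Rightarrow> real" where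
  "gamma_u M K \<tau> r T =
     (let e = 2 powr (r / (K * (1 - \<tau> / T))) - 1;
          a = (K + \<tau>) / (2 * \<tau> * (M - K)) * e
      in a + sqrt (a\<^sup>2 + e / (\<tau> * (M - K))))"

definition zeta_zf :: "real \<Rightarrow> real \<Rightarrow> real \<Rightarrow> real \<Rightarrow> real \<Rightarrow> real \<Rightarrow> real \<Rightarrow> real \<Rightarrow> real \<Rightarrow> real \<Rightarrow> real" where
  "zeta_zf M K \<tau> r \<alpha> \<rho>r \<rho>d \<rho>s \<rho>0 T =
     r / (\<alpha> * K * gamma_u M K \<tau> r T + \<rho>s + K * (\<rho>d + 8 * K\<^sup>2 * \<rho>0 / (3 * T))
          + M * (\<rho>r + 2 * K * \<rho>0 + 4 * K\<^sup>2 * \<rho>0 / T))"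

definition zeta'_zf :: "real \<Rightarrow> real \<Rightarrow> real \<Rightarrow> real \<Rightarrow> real \<Rightarrow> real \<Rightarrow> real \<Rightarrow> real" where
  "zeta'_zf r \<alpha> \<rho>r \<rho>d \<rho>s \<rho>0 T =
     Sup {zeta_zf M K \<tau> r \<alpha> \<rho>r \<rho>d \<rho>s \<rho>0 T | M K \<tau>.
            1 \<le> K \<and> K \<le> Kmax \<alpha> \<rho>r \<rho>d \<rho>s \<rho>0 T \<and> K \<le> \<tau> \<and> \<tau> < T \<and> M > K}"

definition zeta_csi :: "real \<Rightarrow> real \<Rightarrow> real \<Rightarrow> real \<Rightarrow> real \<Rightarrow> real \<Rightarrow> real \<Rightarrow> real \<Rightarrow> real \<Rightarrow> real" where
  "zeta_csi M K r \<alpha> \<rho>r \<rho>d \<rho>s \<rho>0 T =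
     1 / ((1 / r) * (\<alpha> * K / (M - K) * (2 powr (r / K) - 1) + M * \<rho>r + K * \<rho>d + \<rho>s))"

definition zeta'_csi :: "real \<Rightarrow> real \<Rightarrow> real \<Rightarrow> real \<Rightarrow> real \<Rightarrow> real \<Rightarrow> real \<Rightarrow> real" where
  "zeta'_csi r \<alpha> \<rho>r \<rho>d \<rho>s \<rho>0 T =
     Sup {zeta_csi M K r \<alpha> \<rho>r \<rho>d \<rho>s \<rho>0 T | M K.
            1 \<le> K \<and> K \<le> Kmax \<alpha> \<rho>r \<rho>d \<rho>s \<rho>0 T \<and> M > K}"

end

theory Submission
  imports Defs
begin

text \<open>Both efficiencies are a rate divided by a total power. For every admissible \<open>(M, K, \<tau>)\<close> the ZF
  power exceeds the CSI power at the same \<open>(M, K)\<close> by a factor \<open>1 + \<eta>\<close>, where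
  \<open>\<eta> = min (1/T) (2\<rho>\<^sub>0/(\<rho>\<^sub>r + \<rho>\<^sub>d + \<rho>\<^sub>s))\<close> does not depend on \<open>(M, K, \<tau>)\<close>: \<open>\<gamma>\<^sub>u\<close> is at least \<open>1 + 1/T\<close> times
  the CSI SINR term, and the pilot power \<open>2MK\<rho>\<^sub>0\<close> dominates \<open>\<eta>\<close> times the circuit power. This gives
  the upper bound. For the lower bound take \<open>\<tau> = T/4\<close>: then \<open>\<gamma>\<^sub>u\<close> carries the exponent of CSI at rate
  \<open>4R/3\<close>, and \<open>sqrt (a\<^sup>2 + x) \<le> a + x/(2a)\<close> bounds it by twice the CSI SINR term plus \<open>1/(2K)\<close>, while
  \<open>K \<le> K\<^sub>m\<^sub>a\<^sub>x\<close> keeps the pilot overheads below \<open>\<rho>\<^sub>r\<close> and \<open>\<rho>\<^sub>d\<close>. So the ZF power at rate \<open>R\<close> is at most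
  twice the CSI power at rate \<open>4R/3\<close> minus \<open>\<rho>\<^sub>s - \<alpha>/2 > 0\<close>, and this fixed gap survives passing to
  the suprema.\<close>

definition power_csi :: "real \<Rightarrow> real \<Rightarrow> real \<Rightarrow> real \<Rightarrow> real \<Rightarrow> real \<Rightarrow> real \<Rightarrow> real" where
  "power_csi M K r \<alpha> \<rho>r \<rho>d \<rho>s = \<alpha> * K / (M - K) * (2 powr (r / K) - 1) + M * \<rho>r + K * \<rho>d + \<rho>s"

definition power_zf ::
    "real \<Rightarrow> real \<Rightarrow> real \<Rightarrow> real \<Rightarrow> real \<Rightarrow> real \<Rightarrow> real \<Rightarrow> real \<Rightarrow> real \<Rightarrow> real \<Rightarrow> real" where
  "power_zf M K \<tau> r \<alpha> \<rho>r \<rho>d \<rho>s \<rho>0 T =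
     \<alpha> * K * gamma_u M K \<tau> r T + \<rho>s + K * (\<rho>d + 8 * K\<^sup>2 * \<rho>0 / (3 * T))
       + M * (\<rho>r + 2 * K * \<rho>0 + 4 * K\<^sup>2 * \<rho>0 / T)"

lemma zeta_zf_eq: "zeta_zf M K \<tau> r \<alpha> \<rho>r \<rho>d \<rho>s \<rho>0 T = r / power_zf M K \<tau> r \<alpha> \<rho>r \<rho>d \<rho>s \<rho>0 T"
  unfolding zeta_zf_def power_zf_def ..

lemma zeta_csi_eq:
  "r \<noteq> 0 \<Longrightarrow> zeta_csi M K r \<alpha> \<rho>r \<rho>d \<rho>s \<rho>0 T = r / power_csi M K r \<alpha> \<rho>r \<rho>d \<rho>s"
  unfolding zeta_csi_def power_csi_def by simp

lemma power_csi_gt: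
  assumes "r > 0" "\<alpha> > 0" "\<rho>r > 0" "\<rho>d > 0" "\<rho>s > 0" "1 \<le> K" "K < M"
  shows "\<rho>r < power_csi M K r \<alpha> \<rho>r \<rho>d \<rho>s"
proof -
  have "0 < \<alpha> * K / (M - K) * (2 powr (r / K) - 1)" using assms by simp
  moreover have "\<rho>r < M * \<rho>r" "0 < K * \<rho>d" using assms by auto
  ultimately show ?thesis unfolding power_csi_def using assms by linarith
qed

lemma zeta_csi_bounds:
  assumes "r > 0" "\<alpha> > 0" "\<rho>r > 0" "\<rho>d > 0" "\<rho>s > 0" "1 \<le> K" "K < M"
  shows "0 < zeta_csi M K r \<alpha> \<rho>r \<rho>d \<rho>s \<rho>0 T" "zeta_csi M K r \<alpha> \<rho>r \<rho>d \<rho>s \<rho>0 T \<le> r / \<rho>r"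
  using power_csi_gt[OF assms] assms
  by (auto simp: zeta_csi_eq intro: divide_left_mono)

lemma sqrt_square_add_ge: "a \<ge> 0 \<Longrightarrow> x \<ge> 0 \<Longrightarrow> a \<le> sqrt (a\<^sup>2 + x)"
  by (metis le_add_same_cancel1 real_sqrt_abs real_sqrt_le_mono abs_of_nonneg)

lemma sqrt_square_add_le:
  fixes a x :: real
  assumes "a > 0" "x \<ge> 0"
  shows "sqrt (a\<^sup>2 + x) \<le> a + x / (2 * a)"
proof -
  have "a\<^sup>2 + x \<le> (a + x / (2 * a))\<^sup>2"
    using assms by (simp add: power2_eq_square field_simps)
  then show ?thesis
    using assms by (metis real_sqrt_le_mono real_sqrt_abs abs_of_nonneg add_nonneg_nonneg
        divide_nonneg_pos less_imp_le mult_pos_pos zero_less_numeral)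
qed

lemma gamma_u_eq:
  "gamma_u M K \<tau> r T =
     (K + \<tau>) / (2 * \<tau> * (M - K)) * (2 powr (r / (K * (1 - \<tau> / T))) - 1)
     + sqrt (((K + \<tau>) / (2 * \<tau> * (M - K)) * (2 powr (r / (K * (1 - \<tau> / T))) - 1))\<^sup>2
             + (2 powr (r / (K * (1 - \<tau> / T))) - 1) / (\<tau> * (M - K)))"
  unfolding gamma_u_def Let_def ..

lemma gamma_u_ge:
  assumes "0 < K" "K \<le> \<tau>" "\<tau> < T" "K < M" "r \<ge> 0"
  shows "(1 + K / \<tau>) * (2 powr (r / (K * (1 - \<tau> / T))) - 1) / (M - K) \<le> gamma_u M K \<tau> r T"
proof -
  define e where "e = 2 powr (r / (K * (1 - \<tau> / T))) - 1"
  define a where "a = (K + \<tau>) / (2 * \<tau> * (M - K)) * e"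
  have "\<tau> > 0" "T > 0" "1 - \<tau> / T > 0" using assms by auto
  then have "r / (K * (1 - \<tau> / T)) \<ge> 0" using assms by simp
  then have "e \<ge> 0" unfolding e_def by (simp add: ge_one_powr_ge_zero)
  then have "a \<ge> 0" "e / (\<tau> * (M - K)) \<ge> 0" unfolding a_def using assms \<open>\<tau> > 0\<close> by simp_all
  then have "2 * a \<le> gamma_u M K \<tau> r T"
    using sqrt_square_add_ge unfolding gamma_u_eq a_def[symmetric] e_def[symmetric]
    by (metis add_le_cancel_left mult_2)
  moreover have "2 * a = (1 + K / \<tau>) * e / (M - K)"
    unfolding a_def using \<open>\<tau> > 0\<close> assms by (simp add: field_simps)
  ultimately show ?thesis unfolding e_def by simp
qed

lemma gamma_u_le:
  assumes "0 < K" "K \<le> \<tau>" "\<tau> < T" "K < M" "r > 0"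
  shows "gamma_u M K \<tau> r T
           \<le> (1 + K / \<tau>) * (2 powr (r / (K * (1 - \<tau> / T))) - 1) / (M - K) + 1 / (K + \<tau>)"
proof -
  define e where "e = 2 powr (r / (K * (1 - \<tau> / T))) - 1"
  define a where "a = (K + \<tau>) / (2 * \<tau> * (M - K)) * e"
  have "\<tau> > 0" "T > 0" "1 - \<tau> / T > 0" using assms by auto
  then have "e > 0" unfolding e_def using assms by simp
  then have a: "a > 0" "e / (\<tau> * (M - K)) \<ge> 0" unfolding a_def using assms \<open>\<tau> > 0\<close> by simp_all
  have "2 * a = (K + \<tau>) * (e / (\<tau> * (M - K)))"
    unfolding a_def using \<open>\<tau> > 0\<close> assms by (simp add: field_simps)
  moreover have "e / (\<tau> * (M - K)) \<noteq> 0" using \<open>\<tau> > 0\<close> \<open>e > 0\<close> assms by simp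
  ultimately have "e / (\<tau> * (M - K)) / (2 * a) = 1 / (K + \<tau>)" by simp
  moreover have "2 * a = (1 + K / \<tau>) * e / (M - K)"
    unfolding a_def using \<open>\<tau> > 0\<close> assms by (simp add: field_simps)
  ultimately show ?thesis
    using sqrt_square_add_le[OF a] unfolding gamma_u_eq a_def[symmetric] e_def[symmetric] by simp
qed

lemma power_zf_ge_power_csi:
  assumes "r > 0" "\<alpha> > 0" "\<rho>r > 0" "\<rho>d > 0" "\<rho>s > 0" "\<rho>0 > 0"
    and "1 \<le> K" "K \<le> \<tau>" "\<tau> < T" "K < M"
  shows "(1 + min (1 / T) (2 * \<rho>0 / (\<rho>r + \<rho>d + \<rho>s))) * power_csi M K r \<alpha> \<rho>r \<rho>d \<rho>s
           \<le> power_zf M K \<tau> r \<alpha> \<rho>r \<rho>d \<rho>s \<rho>0 T"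
proof -
  define \<eta> where "\<eta> = min (1 / T) (2 * \<rho>0 / (\<rho>r + \<rho>d + \<rho>s))"
  define c where "c = (2 powr (r / K) - 1) / (M - K)"
  define rest where "rest = M * \<rho>r + K * \<rho>d + \<rho>s"
  have pos: "\<tau> > 0" "T > 0" "0 < 1 - \<tau> / T" "1 - \<tau> / T \<le> 1" using assms by auto
  have "2 powr (r / K) - 1 > 0" using assms by simp
  then have "c > 0" unfolding c_def using assms by simp
  have "r / K \<le> r / (K * (1 - \<tau> / T))"
    using pos assms by (intro divide_left_mono mult_pos_pos) (auto simp: mult_le_cancel_left1)
  then have "2 powr (r / K) - 1 \<le> 2 powr (r / (K * (1 - \<tau> / T))) - 1" by simp
  moreover have "1 + 1 / T \<le> 1 + K / \<tau>"
    using assms pos by (simp add: frac_le)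
  moreover have "0 \<le> 1 + K / \<tau>" using assms pos by simp
  ultimately have "(1 + 1 / T) * (2 powr (r / K) - 1) \<le> (1 + K / \<tau>) * (2 powr (r / (K * (1 - \<tau> / T))) - 1)"
    using \<open>2 powr (r / K) - 1 > 0\<close> by (metis less_imp_le mult_mono)
  then have "(1 + 1 / T) * c \<le> (1 + K / \<tau>) * (2 powr (r / (K * (1 - \<tau> / T))) - 1) / (M - K)"
    unfolding c_def using assms by (simp add: divide_right_mono)
  also have "\<dots> \<le> gamma_u M K \<tau> r T" using assms by (intro gamma_u_ge) auto
  finally have gamma: "\<alpha> * K * ((1 + 1 / T) * c) \<le> \<alpha> * K * gamma_u M K \<tau> r T"
    using assms by (intro mult_left_mono) auto
  have "\<eta> * (\<alpha> * K * c) \<le> 1 / T * (\<alpha> * K * c)"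
    unfolding \<eta>_def using \<open>c > 0\<close> assms by (intro mult_right_mono) auto
  have "rest \<le> M * K * (\<rho>r + \<rho>d + \<rho>s)"
  proof -
    have "1 \<le> M * K" using assms mult_mono[of 1 M 1 K] by simp
    then have "M * \<rho>r \<le> M * K * \<rho>r" "K * \<rho>d \<le> M * K * \<rho>d" "\<rho>s \<le> M * K * \<rho>s"
      using assms by (simp_all add: mult_le_cancel_right1 mult_le_cancel_left1)
    then show ?thesis unfolding rest_def by (simp add: algebra_simps)
  qed
  then have "\<eta> * rest \<le> 2 * \<rho>0 / (\<rho>r + \<rho>d + \<rho>s) * (M * K * (\<rho>r + \<rho>d + \<rho>s))"
    unfolding \<eta>_def rest_def using assms
    by (intro mult_mono) (auto intro!: add_pos_pos mult_pos_pos)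
  also have "\<dots> = 2 * M * K * \<rho>0" using assms by (simp add: field_simps)
  finally have "\<eta> * rest \<le> 2 * M * K * \<rho>0" .
  moreover have "K * (8 * K\<^sup>2 * \<rho>0 / (3 * T)) \<ge> 0" "M * (4 * K\<^sup>2 * \<rho>0 / T) \<ge> 0"
    using assms pos by auto
  moreover have "power_csi M K r \<alpha> \<rho>r \<rho>d \<rho>s = \<alpha> * K * c + rest"
    unfolding power_csi_def c_def rest_def by simp
  ultimately show ?thesis
    using gamma \<open>\<eta> * (\<alpha> * K * c) \<le> _\<close>
    unfolding \<eta>_def[symmetric] power_zf_def rest_def by (simp add: algebra_simps)
qed

lemma power_zf_le_twice_power_csi:
  assumes "r > 0" "\<alpha> > 0" "\<rho>r > 0" "\<rho>d > 0" "\<rho>s > 0" "\<rho>0 > 0"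
    and "1 \<le> K" "K \<le> T / 4" "3 * K * \<rho>0 \<le> \<rho>r" "2 * K * \<rho>0 \<le> 3 * \<rho>d" "K < M"
  shows "power_zf M K (T / 4) r \<alpha> \<rho>r \<rho>d \<rho>s \<rho>0 T
           \<le> 2 * power_csi M K (4 / 3 * r) \<alpha> \<rho>r \<rho>d \<rho>s - (\<rho>s - \<alpha> / 2)"
proof -
  define \<tau> where "\<tau> = T / 4"
  define c where "c = (2 powr (4 / 3 * r / K) - 1) / (M - K)"
  have pos: "T > 0" "\<tau> > 0" "K \<le> \<tau>" "\<tau> < T" using assms by (auto simp: \<tau>_def)
  have "r / (K * (1 - \<tau> / T)) = 4 / 3 * r / K" unfolding \<tau>_def using pos by (simp add: field_simps)
  then have "gamma_u M K \<tau> r T \<le> (1 + K / \<tau>) * c + 1 / (K + \<tau>)"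
    using gamma_u_le[of K \<tau> T M r] pos assms unfolding c_def by simp
  moreover have "c > 0" unfolding c_def using assms by simp
  ultimately have "\<alpha> * K * gamma_u M K \<tau> r T \<le> \<alpha> * K * ((1 + K / \<tau>) * c + 1 / (K + \<tau>))"
    using assms by (intro mult_left_mono) auto
  also have "\<dots> = \<alpha> * K * c + \<alpha> * K * c * (K / \<tau>) + \<alpha> * (K / (K + \<tau>))"
    by (simp add: algebra_simps)
  also have "\<dots> \<le> \<alpha> * K * c + \<alpha> * K * c * 1 + \<alpha> * (1 / 2)"
    using pos assms \<open>c > 0\<close> by (intro add_mono mult_left_mono) (auto simp: field_simps)
  finally have gamma: "\<alpha> * K * gamma_u M K \<tau> r T \<le> 2 * (\<alpha> * K * c) + \<alpha> / 2"
    by (simp add: algebra_simps)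
  have overhead: "K\<^sup>2 * \<rho>0 / T \<le> K * \<rho>0 / 4"
    using assms pos by (simp add: power2_eq_square field_simps mult_left_mono)
  have "8 * K\<^sup>2 * \<rho>0 / (3 * T) \<le> \<rho>d"
    using overhead assms(10) by (simp add: field_simps)
  moreover have "2 * K * \<rho>0 + 4 * K\<^sup>2 * \<rho>0 / T \<le> \<rho>r"
    using overhead assms(9) by (simp add: field_simps)
  ultimately have "K * (8 * K\<^sup>2 * \<rho>0 / (3 * T)) \<le> K * \<rho>d" "M * (2 * K * \<rho>0 + 4 * K\<^sup>2 * \<rho>0 / T) \<le> M * \<rho>r"
    using assms by (auto intro!: mult_left_mono simp del: times_divide_eq_right)
  moreover have "power_csi M K (4 / 3 * r) \<alpha> \<rho>r \<rho>d \<rho>s = \<alpha> * K * c + M * \<rho>r + K * \<rho>d + \<rho>s"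
    unfolding power_csi_def c_def by simp
  ultimately show ?thesis
    using gamma unfolding power_zf_def \<tau>_def[symmetric] by (simp add: algebra_simps)
qed

lemma zeta_zf_mult_le_zeta_csi:
  assumes "r > 0" "\<alpha> > 0" "\<rho>r > 0" "\<rho>d > 0" "\<rho>s > 0" "\<rho>0 > 0"
    and "1 \<le> K" "K \<le> \<tau>" "\<tau> < T" "K < M"
  shows "zeta_zf M K \<tau> r \<alpha> \<rho>r \<rho>d \<rho>s \<rho>0 T * (1 + min (1 / T) (2 * \<rho>0 / (\<rho>r + \<rho>d + \<rho>s)))
           \<le> zeta_csi M K r \<alpha> \<rho>r \<rho>d \<rho>s \<rho>0 T"
proof -
  define \<eta> where "\<eta> = min (1 / T) (2 * \<rho>0 / (\<rho>r + \<rho>d + \<rho>s))"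
  have "\<eta> > 0" unfolding \<eta>_def using assms by auto
  have "0 < power_csi M K r \<alpha> \<rho>r \<rho>d \<rho>s"
    using power_csi_gt assms by (meson less_trans)
  moreover have "power_csi M K r \<alpha> \<rho>r \<rho>d \<rho>s \<le> power_zf M K \<tau> r \<alpha> \<rho>r \<rho>d \<rho>s \<rho>0 T / (1 + \<eta>)"
    using power_zf_ge_power_csi[OF assms] \<open>\<eta> > 0\<close> unfolding \<eta>_def[symmetric] by (simp add: field_simps)
  ultimately have "r / (power_zf M K \<tau> r \<alpha> \<rho>r \<rho>d \<rho>s \<rho>0 T / (1 + \<eta>)) \<le> r / power_csi M K r \<alpha> \<rho>r \<rho>d \<rho>s"
    using \<open>r > 0\<close> by (intro divide_left_mono mult_pos_pos) auto
  then show ?thesis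
    using \<open>r > 0\<close> unfolding \<eta>_def[symmetric] zeta_zf_eq by (simp add: zeta_csi_eq)
qed

lemma inverse_zeta_zf_quarter_le:
  assumes "r > 0" "\<alpha> > 0" "\<rho>r > 0" "\<rho>d > 0" "\<rho>s > 0" "\<rho>0 > 0"
    and "1 \<le> K" "K \<le> T / 4" "3 * K * \<rho>0 \<le> \<rho>r" "2 * K * \<rho>0 \<le> 3 * \<rho>d" "K < M"
  shows "0 < zeta_zf M K (T / 4) r \<alpha> \<rho>r \<rho>d \<rho>s \<rho>0 T"
    and "1 / zeta_zf M K (T / 4) r \<alpha> \<rho>r \<rho>d \<rho>s \<rho>0 T
           \<le> (8 / 3) / zeta_csi M K (4 / 3 * r) \<alpha> \<rho>r \<rho>d \<rho>s \<rho>0 T - (\<rho>s - \<alpha> / 2) / r"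
proof -
  have "0 < power_csi M K r \<alpha> \<rho>r \<rho>d \<rho>s"
    using power_csi_gt assms by (meson less_trans)
  also have "\<dots> \<le> (1 + min (1 / T) (2 * \<rho>0 / (\<rho>r + \<rho>d + \<rho>s))) * power_csi M K r \<alpha> \<rho>r \<rho>d \<rho>s"
    using calculation assms by (simp add: mult_le_cancel_right1)
  also have "\<dots> \<le> power_zf M K (T / 4) r \<alpha> \<rho>r \<rho>d \<rho>s \<rho>0 T"
    using assms by (intro power_zf_ge_power_csi) auto
  finally have "0 < power_zf M K (T / 4) r \<alpha> \<rho>r \<rho>d \<rho>s \<rho>0 T" .
  then show "0 < zeta_zf M K (T / 4) r \<alpha> \<rho>r \<rho>d \<rho>s \<rho>0 T"
    unfolding zeta_zf_eq using assms by simp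
  have "1 / zeta_zf M K (T / 4) r \<alpha> \<rho>r \<rho>d \<rho>s \<rho>0 T = power_zf M K (T / 4) r \<alpha> \<rho>r \<rho>d \<rho>s \<rho>0 T / r"
    unfolding zeta_zf_eq by simp
  also have "\<dots> \<le> (2 * power_csi M K (4 / 3 * r) \<alpha> \<rho>r \<rho>d \<rho>s - (\<rho>s - \<alpha> / 2)) / r"
    using power_zf_le_twice_power_csi[OF assms] assms by (simp add: divide_right_mono)
  also have "\<dots> = (8 / 3) / zeta_csi M K (4 / 3 * r) \<alpha> \<rho>r \<rho>d \<rho>s \<rho>0 T - (\<rho>s - \<alpha> / 2) / r"
    using assms by (simp add: zeta_csi_eq field_simps)
  finally show "1 / zeta_zf M K (T / 4) r \<alpha> \<rho>r \<rho>d \<rho>s \<rho>0 T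
           \<le> (8 / 3) / zeta_csi M K (4 / 3 * r) \<alpha> \<rho>r \<rho>d \<rho>s \<rho>0 T - (\<rho>s - \<alpha> / 2) / r" .
qed

lemma cSup_less_cSup_of_uniform_gap:
  fixes S Z :: "real set"
  assumes "Z \<noteq> {}" "bdd_above S" "0 < Sup S" "\<eta> > 0"
    and "\<And>z. z \<in> Z \<Longrightarrow> \<exists>s\<in>S. z * (1 + \<eta>) \<le> s"
  shows "Sup Z < Sup S"
proof -
  have "z \<le> Sup S / (1 + \<eta>)" if "z \<in> Z" for z
  proof -
    obtain s where "s \<in> S" "z * (1 + \<eta>) \<le> s" using assms(5) \<open>z \<in> Z\<close> by blast
    then have "z * (1 + \<eta>) \<le> Sup S" using assms(2) by (meson cSup_upper order_trans)
    then show ?thesis using \<open>\<eta> > 0\<close> by (simp add: field_simps)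
  qed
  then have "Sup Z \<le> Sup S / (1 + \<eta>)" using \<open>Z \<noteq> {}\<close> by (intro cSup_least)
  also have "\<dots> < Sup S" using assms(3,4) by (simp add: field_simps)
  finally show ?thesis .
qed

lemma cSup_div_less_cSup_of_reciprocal_gap:
  fixes S Z :: "real set"
  assumes "S \<noteq> {}" "bdd_above S" "0 < Sup S" "bdd_above Z" "c > 0" "\<delta> > 0"
    and "\<And>s. s \<in> S \<Longrightarrow> \<exists>z\<in>Z. 0 < z \<and> 1 / z \<le> c / s - \<delta>"
  shows "Sup S / c < Sup Z"
proof -
  \<comment> \<open>\<open>v\<close> solves \<open>c / v - \<delta> = c / Sup S\<close>\<close>
  define v where "v = 1 / (1 / Sup S + \<delta> / c)"
  have "0 < \<delta> / c" using assms(5,6) by simp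
  then have "0 < v" "v < Sup S" unfolding v_def using assms(3)
    by (smt (verit, ccfv_threshold) mult.commute mult_imp_div_pos_less
        mult_imp_le_div_pos zero_less_divide_1_iff)+
  then obtain s where "s \<in> S" "v < s" using less_cSup_iff[OF assms(1,2)] by blast
  then obtain z where "z \<in> Z" "0 < z" "1 / z \<le> c / s - \<delta>" using assms(7) by blast
  moreover have "c / s - \<delta> < c / v - \<delta>"
    using \<open>0 < v\<close> \<open>v < s\<close> \<open>c > 0\<close> by (simp add: divide_strict_left_mono)
  moreover have "c / v - \<delta> = c / Sup S" unfolding v_def using assms(3,5) by (simp add: field_simps)
  ultimately have "1 / z < c / Sup S" by linarith
  then have "Sup S / c < z" using \<open>0 < z\<close> assms(3,5) by (simp add: field_simps)
  also have "z \<le> Sup Z" using \<open>z \<in> Z\<close> assms(4) by (rule cSup_upper)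
  finally show ?thesis .
qed

lemma le_Kmax_iff:
  assumes "\<rho>0 > 0"
  shows "K \<le> Kmax \<alpha> \<rho>r \<rho>d \<rho>s \<rho>0 T \<longleftrightarrow> K \<le> T / 4 \<and> 3 * K * \<rho>0 \<le> \<rho>r \<and> 2 * K * \<rho>0 \<le> 3 * \<rho>d"
  using assms by (simp add: Kmax_def field_simps)

lemma zeta_csi_values_bdd_above:
  assumes "r > 0" "\<alpha> > 0" "\<rho>r > 0" "\<rho>d > 0" "\<rho>s > 0"
  shows "bdd_above {zeta_csi M K r \<alpha> \<rho>r \<rho>d \<rho>s \<rho>0 T | M K.
                      1 \<le> K \<and> K \<le> Kmax \<alpha> \<rho>r \<rho>d \<rho>s \<rho>0 T \<and> M > K}"
  using zeta_csi_bounds(2)[OF assms] by (intro bdd_aboveI[where M = "r / \<rho>r"]) blast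

lemma zeta'_csi_pos:
  assumes "r > 0" "\<alpha> > 0" "\<rho>r > 0" "\<rho>d > 0" "\<rho>s > 0" "1 \<le> Kmax \<alpha> \<rho>r \<rho>d \<rho>s \<rho>0 T"
  shows "0 < zeta'_csi r \<alpha> \<rho>r \<rho>d \<rho>s \<rho>0 T"
proof -
  have "0 < zeta_csi 2 1 r \<alpha> \<rho>r \<rho>d \<rho>s \<rho>0 T" using zeta_csi_bounds(1) assms by simp
  also have "\<dots> \<le> zeta'_csi r \<alpha> \<rho>r \<rho>d \<rho>s \<rho>0 T"
    unfolding zeta'_csi_def using zeta_csi_values_bdd_above[OF assms(1-5)] assms(6)
    by (intro cSup_upper) fastforce+
  finally show ?thesis .
qed

lemma zeta_zf_values_bdd_above:
  assumes "r > 0" "\<alpha> > 0" "\<rho>r > 0" "\<rho>d > 0" "\<rho>s > 0" "\<rho>0 > 0"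
  shows "bdd_above {zeta_zf M K \<tau> r \<alpha> \<rho>r \<rho>d \<rho>s \<rho>0 T | M K \<tau>.
                      1 \<le> K \<and> K \<le> Kmax \<alpha> \<rho>r \<rho>d \<rho>s \<rho>0 T \<and> K \<le> \<tau> \<and> \<tau> < T \<and> M > K}"
proof (intro bdd_aboveI[where M = "r / \<rho>r"], clarify)
  fix M K \<tau> :: real
  assume "1 \<le> K" "K \<le> \<tau>" "\<tau> < T" "K < M"
  define z where "z = zeta_zf M K \<tau> r \<alpha> \<rho>r \<rho>d \<rho>s \<rho>0 T"
  define \<eta> where "\<eta> = min (1 / T) (2 * \<rho>0 / (\<rho>r + \<rho>d + \<rho>s))"
  have "\<eta> > 0" unfolding \<eta>_def using assms \<open>1 \<le> K\<close> \<open>K \<le> \<tau>\<close> \<open>\<tau> < T\<close> by auto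
  have "z * (1 + \<eta>) \<le> zeta_csi M K r \<alpha> \<rho>r \<rho>d \<rho>s \<rho>0 T"
    unfolding z_def \<eta>_def using zeta_zf_mult_le_zeta_csi assms \<open>1 \<le> K\<close> \<open>K \<le> \<tau>\<close> \<open>\<tau> < T\<close> \<open>K < M\<close>
    by blast
  also have "\<dots> \<le> r / \<rho>r" using zeta_csi_bounds(2) assms \<open>1 \<le> K\<close> \<open>K < M\<close> by blast
  finally have "z * (1 + \<eta>) \<le> r / \<rho>r" .
  moreover have "0 < r / \<rho>r" using assms by simp
  ultimately show "z \<le> r / \<rho>r" using \<open>\<eta> > 0\<close>
    by (smt (verit) mult_le_cancel_left1 mult.commute)
qed

theorem zeta'_zf_less_zeta'_csi:
  assumes "r > 0" "\<alpha> > 0" "\<rho>r > 0" "\<rho>d > 0" "\<rho>s > 0" "\<rho>0 > 0" "T > 1"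
    and "1 \<le> Kmax \<alpha> \<rho>r \<rho>d \<rho>s \<rho>0 T"
  shows "zeta'_zf r \<alpha> \<rho>r \<rho>d \<rho>s \<rho>0 T < zeta'_csi r \<alpha> \<rho>r \<rho>d \<rho>s \<rho>0 T"
proof -
  define Km where "Km = Kmax \<alpha> \<rho>r \<rho>d \<rho>s \<rho>0 T"
  define Z where "Z = {zeta_zf M K \<tau> r \<alpha> \<rho>r \<rho>d \<rho>s \<rho>0 T | M K \<tau>. 1 \<le> K \<and> K \<le> Km \<and> K \<le> \<tau> \<and> \<tau> < T \<and> M > K}"
  define S where "S = {zeta_csi M K r \<alpha> \<rho>r \<rho>d \<rho>s \<rho>0 T | M K. 1 \<le> K \<and> K \<le> Km \<and> M > K}"
  have "zeta_zf 2 1 1 r \<alpha> \<rho>r \<rho>d \<rho>s \<rho>0 T \<in> Z" unfolding Z_def Km_def using assms(7,8) by fastforce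
  moreover have "\<exists>s\<in>S. z * (1 + min (1 / T) (2 * \<rho>0 / (\<rho>r + \<rho>d + \<rho>s))) \<le> s" if "z \<in> Z" for z
    using that zeta_zf_mult_le_zeta_csi[OF assms(1-6)] unfolding Z_def S_def by blast
  ultimately have "Sup Z < Sup S"
    using zeta_csi_values_bdd_above[OF assms(1-5)] zeta'_csi_pos[OF assms(1-5,8)] assms
    unfolding S_def Km_def zeta'_csi_def
    by (intro cSup_less_cSup_of_uniform_gap[where \<eta> = "min (1 / T) (2 * \<rho>0 / (\<rho>r + \<rho>d + \<rho>s))"]) auto
  then show ?thesis unfolding zeta'_zf_def zeta'_csi_def Z_def S_def Km_def .
qed

theorem three_eighths_zeta'_csi_less_zeta'_zf:
  assumes "r > 0" "\<alpha> > 0" "\<rho>r > 0" "\<rho>d > 0" "\<rho>s > 0" "\<rho>0 > 0"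
    and "1 \<le> Kmax \<alpha> \<rho>r \<rho>d \<rho>s \<rho>0 T" "\<alpha> / 2 < \<rho>s"
  shows "3 / 8 * zeta'_csi (4 / 3 * r) \<alpha> \<rho>r \<rho>d \<rho>s \<rho>0 T < zeta'_zf r \<alpha> \<rho>r \<rho>d \<rho>s \<rho>0 T"
proof -
  define Km where "Km = Kmax \<alpha> \<rho>r \<rho>d \<rho>s \<rho>0 T"
  define Z where "Z = {zeta_zf M K \<tau> r \<alpha> \<rho>r \<rho>d \<rho>s \<rho>0 T | M K \<tau>. 1 \<le> K \<and> K \<le> Km \<and> K \<le> \<tau> \<and> \<tau> < T \<and> M > K}"
  define S where "S = {zeta_csi M K (4 / 3 * r) \<alpha> \<rho>r \<rho>d \<rho>s \<rho>0 T | M K. 1 \<le> K \<and> K \<le> Km \<and> M > K}"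
  have "4 / 3 * r > 0" using assms by simp
  have "zeta_csi 2 1 (4 / 3 * r) \<alpha> \<rho>r \<rho>d \<rho>s \<rho>0 T \<in> S" unfolding S_def Km_def using assms(7) by fastforce
  moreover have "\<exists>z\<in>Z. 0 < z \<and> 1 / z \<le> (8 / 3) / s - (\<rho>s - \<alpha> / 2) / r" if "s \<in> S" for s
  proof -
    obtain M K where s: "s = zeta_csi M K (4 / 3 * r) \<alpha> \<rho>r \<rho>d \<rho>s \<rho>0 T"
      and K: "1 \<le> K" "K \<le> Km" "K < M"
      using \<open>s \<in> S\<close> unfolding S_def by blast
    then have "K \<le> T / 4" "3 * K * \<rho>0 \<le> \<rho>r" "2 * K * \<rho>0 \<le> 3 * \<rho>d"
      using le_Kmax_iff assms(6) unfolding Km_def by blast+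
    moreover from this have "zeta_zf M K (T / 4) r \<alpha> \<rho>r \<rho>d \<rho>s \<rho>0 T \<in> Z"
      unfolding Z_def using K by fastforce
    ultimately show ?thesis
      using inverse_zeta_zf_quarter_le[OF assms(1-6) K(1) _ _ _ K(3)] unfolding s by blast
  qed
  ultimately have "Sup S / (8 / 3) < Sup Z"
    using zeta_csi_values_bdd_above[OF \<open>4 / 3 * r > 0\<close> assms(2-5)]
      zeta'_csi_pos[OF \<open>4 / 3 * r > 0\<close> assms(2-5,7)] zeta_zf_values_bdd_above[OF assms(1-6)] assms
    unfolding S_def Z_def Km_def zeta'_csi_def
    by (intro cSup_div_less_cSup_of_reciprocal_gap[where \<delta> = "(\<rho>s - \<alpha> / 2) / r"]) auto
  then show ?thesis unfolding zeta'_zf_def zeta'_csi_def Z_def S_def Km_def by simp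
qed

theorem corollary1:
  fixes R \<alpha> \<rho>r \<rho>d \<rho>s \<rho>0 T :: real
  assumes "R > 0"
    and "\<alpha> > 1" and "\<rho>r > 0" and "\<rho>d > 0" and "\<rho>s > 0" and "\<rho>0 > 0" and "T > 1"
    and "min (T / 4) (min (1 / (3 * (\<rho>0 / \<rho>r))) (3 * (\<rho>d / \<rho>r) / (2 * (\<rho>0 / \<rho>r)))) > 10"
    and "\<rho>r > \<alpha> / (2 * (\<rho>s / \<rho>r))"
  shows "3 / 8 * zeta'_csi (4 / 3 * R) \<alpha> \<rho>r \<rho>d \<rho>s \<rho>0 T < zeta'_zf R \<alpha> \<rho>r \<rho>d \<rho>s \<rho>0 T
       \<and> zeta'_zf R \<alpha> \<rho>r \<rho>d \<rho>s \<rho>0 T < zeta'_csi R \<alpha> \<rho>r \<rho>d \<rho>s \<rho>0 T"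
proof -
  have "1 / (3 * (\<rho>0 / \<rho>r)) = \<rho>r / (3 * \<rho>0)" "3 * (\<rho>d / \<rho>r) / (2 * (\<rho>0 / \<rho>r)) = 3 * \<rho>d / (2 * \<rho>0)"
    using assms(3) by (simp_all add: field_simps)
  then have "10 < Kmax \<alpha> \<rho>r \<rho>d \<rho>s \<rho>0 T" using assms(8) unfolding Kmax_def by (simp only:)
  moreover have "\<alpha> / 2 < \<rho>s"
    using assms(3,5,9) by (simp add: field_simps)
  ultimately show ?thesis
    using three_eighths_zeta'_csi_less_zeta'_zf zeta'_zf_less_zeta'_csi assms(1-7) by simp
qed

end
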